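(* Let $\mathbb{X}$ be a finite-dimensional real Banach space. Then $\operatorname{Ext}B_{\mathbb{X}}$ is a $\mathcal{K}$-set: every linear operator $T:\mathbb{X}\to\mathbb{X}$ that preserves Birkhoff–James orthogonality at each extreme point of $B_{\mathbb{X}}$ satisfies $\|Tx\|=\lambda\|x\|$ for all $x\in\mathbb{X}$, for some constant $\lambda\ge0$.
   Context: $u\perp_B v$ means $\|u+\lambda v\|\ge\|u\|$ for all real $\lambda$; $T$ preserves Birkhoff–James orthogonality at $x$ if $x\perp_B w\Rightarrow Tx\perp_B Tw$ for all $w$. $\operatorname{Ext}B_{\mathbb{X}}$ is the set of extreme points of the closed unit ball. A set $A\subseteq S_{\mathbb{X}}$ is a $\mathcal{K}$-set if every bounded linear $T:\mathbb{X}\to\mathbb{X}$ preserving Birkhoff–James orthogonality at each point of $A$ is a scalar multiple of an isometry. *)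

theory Defs
  imports "HOL-Analysis.Analysis"
begin

definition bj_orth :: "'a::real_normed_vector \<Rightarrow> 'a \<Rightarrow> bool" where
  "bj_orth u v \<longleftrightarrow> (\<forall>c::real. norm (u + c *\<^sub>R v) \<ge> norm u)"

definition preserves_bj_at :: "('a::real_normed_vector \<Rightarrow> 'a) \<Rightarrow> 'a \<Rightarrow> bool" where
  "preserves_bj_at T x \<longleftrightarrow> (\<forall>w. bj_orth x w \<longrightarrow> bj_orth (T x) (T w))"

end

theory Submission
  imports Defs
begin

text \<open>Write \<open>N x = \<parallel>T x\<parallel>\<close>. If \<open>g\<close> is a norming functional of \<open>x\<close> (\<open>g \<le> \<parallel>-\<parallel>\<close>, \<open>g x = \<parallel>x\<parallel>\<close>),
  then \<open>N x * g y \<le> \<parallel>x\<parallel> * N y\<close> for all \<open>y\<close>: maximising \<open>N\<close> on the face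
  \<open>{z. \<parallel>z\<parallel> \<le> 1 \<and> g z = 1}\<close> of the unit ball, and then a strictly convex function on the maximisers,
  gives an extreme point \<open>e\<close> of the ball with \<open>N x \<le> \<parallel>x\<parallel> * N e\<close>; since \<open>e\<close> is
  BJ-orthogonal to \<open>y - g y *\<^sub>R e\<close> and \<open>T\<close> preserves this, \<open>\<bar>g y\<bar> * N e \<le> N y\<close>.
  Along a fine partition of a segment avoiding \<open>0\<close> these inequalities telescope, so the ratio
  \<open>N x / \<parallel>x\<parallel>\<close> cannot decrease along the segment and is therefore constant.
  Finite dimension supplies the compactness and, via Hahn--Banach, the norming functionals.\<close>

definition norming_functional :: "('a::real_normed_vector \<Rightarrow> real) \<Rightarrow> 'a \<Rightarrow> bool" where
  "norming_functional g x \<longleftrightarrow> linear g \<and> (\<forall>y. g y \<le> norm y) \<and> g x = norm x"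

lemma hahn_banach_extension_value:
  fixes f :: "'a::real_normed_vector \<Rightarrow> real"
  assumes V: "subspace V" and f: "linear f" and le: "\<forall>y\<in>V. f y \<le> norm y"
  obtains c where "\<And>u. u \<in> V \<Longrightarrow> f u - norm (u - v) \<le> c"
    and "\<And>w. w \<in> V \<Longrightarrow> c \<le> norm (w + v) - f w"
proof -
  interpret f: linear f by fact
  define A where "A = (\<lambda>u. f u - norm (u - v)) ` V"
  have bound: "a \<le> norm (w + v) - f w" if "a \<in> A" "w \<in> V" for a w
  proof -
    obtain u where u: "u \<in> V" "a = f u - norm (u - v)"
      using \<open>a \<in> A\<close> unfolding A_def by blast
    have "f u + f w = f (u + w)" by (simp add: f.add)
    also have "\<dots> \<le> norm (u + w)" using le u(1) \<open>w \<in> V\<close> V by (simp add: subspace_add)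
    also have "\<dots> \<le> norm (u - v) + norm (w + v)"
      using norm_triangle_ineq[of "u - v" "w + v"] by simp
    finally show ?thesis using u(2) by simp
  qed
  have "A \<noteq> {}" unfolding A_def using subspace_0[OF V] by blast
  moreover have "bdd_above A"
    using bound[of _ 0] V by (auto simp: subspace_0 bdd_above_def)
  ultimately show ?thesis
    by (intro that[of "Sup A"] cSup_upper cSup_least) (auto simp: A_def intro: bound)
qed

lemma hahn_banach_one_step:
  fixes f :: "'a::real_normed_vector \<Rightarrow> real"
  assumes V: "subspace V" and f: "linear f" and le: "\<forall>y\<in>V. f y \<le> norm y"
  shows "\<exists>f'. linear f' \<and> (\<forall>y\<in>V. f' y = f y) \<and> (\<forall>y\<in>span (insert v V). f' y \<le> norm y)"
proof (cases "v \<in> V")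
  case True
  then have "span (insert v V) = span V"
    by (simp add: span_redundant span_base)
  also have "\<dots> = V"
    using V by (simp add: span_eq_iff)
  finally show ?thesis using f le by auto
next
  case False
  interpret f: linear f by fact
  obtain c where c_lower: "\<And>u. u \<in> V \<Longrightarrow> f u - norm (u - v) \<le> c"
    and c_upper: "\<And>w. w \<in> V \<Longrightarrow> c \<le> norm (w + v) - f w"
    using hahn_banach_extension_value[OF V f le] by blast
  have dominated: "f w + k * c \<le> norm (w + k *\<^sub>R v)" if "w \<in> V" for w k
  proof -
    consider "k > 0" | "k < 0" | "k = 0" by linarith
    then show ?thesis
    proof cases
      case 1
      have "f w + k * c \<le> f w + k * (norm ((1/k) *\<^sub>R w + v) - f ((1/k) *\<^sub>R w))"
        using 1 V \<open>w \<in> V\<close> by (intro add_left_mono mult_left_mono c_upper subspace_scale) auto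
      also have "(1/k) *\<^sub>R w + v = (1/k) *\<^sub>R (w + k *\<^sub>R v)"
        using 1 by (simp add: scaleR_add_right)
      finally show ?thesis using 1 by (simp add: f.scale right_diff_distrib)
    next
      case 2
      have "f w - norm (w + k *\<^sub>R v) = - k * (f ((1/-k) *\<^sub>R w) - norm ((1/-k) *\<^sub>R (w + k *\<^sub>R v)))"
        using 2 by (simp add: f.scale f.neg right_diff_distrib)
      also have "(1/-k) *\<^sub>R (w + k *\<^sub>R v) = (1/-k) *\<^sub>R w - v"
        using 2 by (simp add: scaleR_add_right)
      also have "- k * (f ((1/-k) *\<^sub>R w) - norm ((1/-k) *\<^sub>R w - v)) \<le> - k * c"
        using 2 V \<open>w \<in> V\<close> by (intro mult_left_mono c_lower subspace_scale) auto
      finally show ?thesis by simp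
    qed (use le \<open>w \<in> V\<close> in simp)
  qed
  obtain BV where BV: "BV \<subseteq> V" "independent BV" "V \<subseteq> span BV"
    using maximal_independent_subset by blast
  have span_BV: "span BV = V"
    using span_minimal[OF BV(1) V] BV(3) by blast
  have "independent (insert v BV)"
    using BV(2) False span_BV by (intro independent_insertI) auto
  then obtain f' where f': "linear f'" "\<And>x. x \<in> insert v BV \<Longrightarrow> f' x = (if x = v then c else f x)"
    using linear_independent_extend[of "insert v BV" "\<lambda>x. if x = v then c else f x"] by blast
  interpret f': linear f' by fact
  have agree: "f' y = f y" if "y \<in> V" for y
    by (rule linear_eq_on[OF f'(1) f, of y BV]) (use that span_BV f'(2) BV(1) False in auto)
  have "f' y \<le> norm y" if y: "y \<in> span (insert v V)" for y
  proof -
    obtain k where "y - k *\<^sub>R v \<in> V"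
      using y span_minimal[OF subset_refl V] unfolding span_insert by blast
    moreover have "f' y = f' (y - k *\<^sub>R v) + k * f' v"
      by (simp add: f'.diff f'.scale)
    ultimately show ?thesis
      using dominated[of "y - k *\<^sub>R v" k] agree f'(2)[of v] by simp
  qed
  then show ?thesis using f'(1) agree by blast
qed

lemma hahn_banach_finite:
  fixes f :: "'a::real_normed_vector \<Rightarrow> real"
  assumes "finite A" "subspace V" "linear f" "\<forall>y\<in>V. f y \<le> norm y"
  shows "\<exists>f'. linear f' \<and> (\<forall>y\<in>V. f' y = f y) \<and> (\<forall>y\<in>span (A \<union> V). f' y \<le> norm y)"
  using assms(1)
proof (induction A rule: finite_induct)
  case empty
  have "span ({} \<union> V) = V" using assms(2) by simp
  with assms(3,4) show ?case by blast
next
  case (insert a A)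
  then obtain f1 where f1: "linear f1" "\<forall>y\<in>V. f1 y = f y" "\<forall>y\<in>span (A \<union> V). f1 y \<le> norm y"
    by blast
  obtain f2 where f2: "linear f2" "\<forall>y\<in>span (A \<union> V). f2 y = f1 y"
      "\<forall>y\<in>span (insert a (span (A \<union> V))). f2 y \<le> norm y"
    using hahn_banach_one_step[OF subspace_span f1(1) f1(3)] by blast
  have "span (insert a A \<union> V) \<subseteq> span (insert a (span (A \<union> V)))"
    by (intro span_mono) (auto intro: span_base)
  moreover have "V \<subseteq> span (A \<union> V)" by (auto intro: span_base)
  ultimately show ?case using f1 f2 by (intro exI[of _ f2]) auto
qed

lemma exists_norming_functional:
  fixes x :: "'a::real_normed_vector" and A :: "'a set"
  assumes "finite A" "span A = UNIV"
  shows "\<exists>g. norming_functional g x"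
proof (cases "x = 0")
  case True
  then show ?thesis
    by (intro exI[of _ "\<lambda>_. 0"]) (auto simp: norming_functional_def linear_iff)
next
  case False
  then have "independent {x}" by simp
  then obtain f where f: "linear f" "f x = norm x"
    using linear_independent_extend[of "{x}" "\<lambda>_. norm x"] by auto
  interpret f: linear f by fact
  have "\<forall>y\<in>span {x}. f y \<le> norm y"
    by (auto simp: span_singleton f.scale f(2) intro!: mult_right_mono)
  then obtain g where "linear g" "\<forall>y\<in>span {x}. g y = f y" "\<forall>y\<in>span (A \<union> span {x}). g y \<le> norm y"
    using hahn_banach_finite[OF assms(1) subspace_span f(1)] by blast
  moreover have "span (A \<union> span {x}) = UNIV"
    using span_mono[of A "A \<union> span {x}"] assms(2) by auto
  moreover have "x \<in> span {x}" by (simp add: span_base)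
  ultimately show ?thesis
    using f(2) unfolding norming_functional_def by auto
qed

lemma bj_orth_if_norming_functional_vanishes:
  assumes "norming_functional g x" "g w = 0"
  shows "bj_orth x w"
proof -
  interpret g: linear g using assms(1) by (simp add: norming_functional_def)
  have "norm x = g (x + c *\<^sub>R w)" for c
    using assms by (simp add: g.add g.scale norming_functional_def)
  then show ?thesis
    using assms(1) unfolding bj_orth_def norming_functional_def by metis
qed

lemma bj_orth_scaleR_le_norm:
  assumes "bj_orth u v"
  shows "\<bar>a\<bar> * norm u \<le> norm (a *\<^sub>R u + v)"
proof (cases "a = 0")
  case False
  have "a *\<^sub>R u + v = a *\<^sub>R (u + (1/a) *\<^sub>R v)"
    using False by (simp add: scaleR_add_right)
  moreover have "norm u \<le> norm (u + (1/a) *\<^sub>R v)"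
    using assms unfolding bj_orth_def by blast
  ultimately show ?thesis by (simp add: mult_left_mono)
qed simp

text \<open>The only place where BJ-orthogonality enters: \<open>e\<close> is BJ-orthogonal to \<open>y - g y *\<^sub>R e\<close>.\<close>
lemma abs_norming_functional_le_if_preserves_bj:
  assumes "linear T" "preserves_bj_at T e" "norming_functional g e" "norm e = 1"
  shows "\<bar>g y\<bar> * norm (T e) \<le> norm (T y)"
proof -
  interpret g: linear g using assms(3) by (simp add: norming_functional_def)
  interpret T: linear T by fact
  have "g e = 1" using assms(3,4) by (simp add: norming_functional_def)
  then have "bj_orth e (y - g y *\<^sub>R e)"
    by (intro bj_orth_if_norming_functional_vanishes[OF assms(3)]) (simp add: g.diff g.scale)
  then have "bj_orth (T e) (T (y - g y *\<^sub>R e))"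
    using assms(2) unfolding preserves_bj_at_def by blast
  then have "\<bar>g y\<bar> * norm (T e) \<le> norm (g y *\<^sub>R T e + T (y - g y *\<^sub>R e))"
    by (rule bj_orth_scaleR_le_norm)
  also have "g y *\<^sub>R T e + T (y - g y *\<^sub>R e) = T y"
    by (simp add: T.diff T.scale)
  finally show ?thesis .
qed

lemma convex_on_linear:
  assumes "linear g" "convex S"
  shows "convex_on S g"
proof -
  interpret g: linear g by fact
  show ?thesis by (rule convex_onI) (simp_all add: g.add g.scale assms(2))
qed

lemma convex_on_norm_linear:
  assumes "linear T" "convex S"
  shows "convex_on S (\<lambda>z. norm (T z))"
proof -
  interpret T: linear T by fact
  show ?thesis
  proof (rule convex_onI)
    fix t :: real and x y
    assume "0 < t" "t < 1"
    then show "norm (T ((1 - t) *\<^sub>R x + t *\<^sub>R y)) \<le> (1 - t) * norm (T x) + t * norm (T y)"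
      using norm_triangle_ineq[of "(1 - t) *\<^sub>R T x" "t *\<^sub>R T y"] by (simp add: T.add T.scale)
  qed (rule assms(2))
qed

lemma extreme_point_of_maximizers:
  assumes "convex_on S f" "\<And>z. z \<in> S \<Longrightarrow> f z \<le> M" "e extreme_point_of {z \<in> S. f z = M}"
  shows "e extreme_point_of S"
  unfolding extreme_point_of_def
proof (intro conjI ballI)
  show "e \<in> S" using assms(3) by (simp add: extreme_point_of_def)
  fix a b assume "a \<in> S" "b \<in> S"
  show "e \<notin> open_segment a b"
  proof
    assume "e \<in> open_segment a b"
    then obtain u where u: "0 < u" "u < 1" and e: "e = (1 - u) *\<^sub>R a + u *\<^sub>R b"
      by (auto simp: in_segment)
    have "M = f e" using assms(3) by (simp add: extreme_point_of_def)
    also have "\<dots> \<le> (1 - u) * f a + u * f b"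
      unfolding e using u \<open>a \<in> S\<close> \<open>b \<in> S\<close> by (intro convex_onD[OF assms(1)]) auto
    finally have "M \<le> (1 - u) * f a + u * f b" .
    moreover have "f a \<le> M" "f b \<le> M" using assms(2) \<open>a \<in> S\<close> \<open>b \<in> S\<close> by auto
    moreover have "(1 - u) * f a \<le> (1 - u) * M" "u * f b \<le> u * M"
      using u \<open>f a \<le> M\<close> \<open>f b \<le> M\<close> by (simp_all add: mult_left_mono)
    moreover have "(1 - u) * M + u * M = M"
      by (simp add: algebra_simps)
    ultimately have "(1 - u) * f a = (1 - u) * M" "u * f b = u * M"
      by linarith+
    then have "f a = M" "f b = M"
      using u by simp_all
    then have "e \<notin> open_segment a b"
      using assms(3) \<open>a \<in> S\<close> \<open>b \<in> S\<close> by (simp add: extreme_point_of_def)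
    with \<open>e \<in> open_segment a b\<close> show False by contradiction
  qed
qed

lemma extreme_point_of_strict_convex_max:
  assumes "e \<in> S" "\<And>z. z \<in> S \<Longrightarrow> q z \<le> q e"
    and strict: "\<And>a b u. a \<noteq> b \<Longrightarrow> 0 < u \<Longrightarrow> u < 1 \<Longrightarrow>
      q ((1 - u) *\<^sub>R a + u *\<^sub>R b) < (1 - u) * q a + u * q b"
  shows "e extreme_point_of S"
  unfolding extreme_point_of_def
proof (intro conjI ballI notI)
  fix a b assume "a \<in> S" "b \<in> S" "e \<in> open_segment a b"
  then obtain u where u: "a \<noteq> b" "0 < u" "u < 1" and e: "e = (1 - u) *\<^sub>R a + u *\<^sub>R b"
    by (auto simp: in_segment)
  have "q e < (1 - u) * q a + u * q b" unfolding e using u by (rule strict)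
  moreover have "q a \<le> q e" "q b \<le> q e" using assms(2) \<open>a \<in> S\<close> \<open>b \<in> S\<close> by auto
  then have "(1 - u) * q a + u * q b \<le> (1 - u) * q e + u * q e"
    using u by (intro add_mono mult_left_mono) simp_all
  ultimately show False by (simp add: algebra_simps)
qed (rule assms(1))

locale normed_space_basis =
  fixes B :: "'a::real_normed_vector set"
  assumes finite_B: "finite B" and independent_B: "independent B" and span_B: "span B = UNIV"
begin

definition coord :: "'a \<Rightarrow> 'a \<Rightarrow> real" where
  "coord x b = representation B x b"

definition from_coords :: "('a \<Rightarrow> real) \<Rightarrow> 'a" where
  "from_coords c = (\<Sum>b\<in>B. c b *\<^sub>R b)"

definition coord_norm :: "'a \<Rightarrow> real" where
  "coord_norm x = (\<Sum>b\<in>B. \<bar>coord x b\<bar>)"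

lemma from_coords_coord [simp]: "from_coords (coord x) = x"
  using sum_representation_eq[of B x B] independent_B span_B finite_B
  by (simp add: from_coords_def coord_def)

lemma linear_coord: "linear (\<lambda>x. coord x b)"
  unfolding linear_iff coord_def using independent_B span_B
  by (simp add: representation_add representation_scale)

lemma coord_basis: "b' \<in> B \<Longrightarrow> coord b' b = (if b = b' then 1 else 0)"
  by (simp add: coord_def representation_basis[OF independent_B])

lemma coord_from_coords:
  assumes "b \<in> B" shows "coord (from_coords c) b = c b"
proof -
  interpret l: linear "\<lambda>x. coord x b" by (rule linear_coord)
  have "coord (from_coords c) b = (\<Sum>b'\<in>B. if b' = b then c b' else 0)"
    unfolding from_coords_def l.sum l.scale by (intro sum.cong) (auto simp: coord_basis)
  then show ?thesis using assms finite_B by simp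
qed

lemma coord_eq_0_outside: "b \<notin> B \<Longrightarrow> coord x b = 0"
  unfolding coord_def by (metis representation_ne_zero)

lemma continuous_on_from_coords: "continuous_on UNIV from_coords"
  unfolding from_coords_def by (intro continuous_intros continuous_on_product_coordinates)

lemma compact_coord_box: "compact (PiE B (\<lambda>_. {-R..R::real}))"
proof -
  let ?S = "\<lambda>i. if i \<in> B then {-R..R} else {undefined::real}"
  have "compactin (product_topology (\<lambda>_. euclidean) UNIV) (PiE UNIV ?S)"
    by (subst compactin_PiE) auto
  moreover have "PiE UNIV ?S = PiE B (\<lambda>_. {-R..R})"
    by (auto simp: PiE_iff extensional_def split: if_splits)
  ultimately show ?thesis by (simp add: euclidean_product_topology)
qed

lemma abs_coord_le_coord_norm: "\<bar>coord x b\<bar> \<le> coord_norm x"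
  unfolding coord_norm_def using finite_B
  by (cases "b \<in> B") (auto simp: coord_eq_0_outside intro: member_le_sum sum_nonneg)

lemma compact_coord_norm_sphere: "compact {x. coord_norm x = 1}"
proof -
  define K where "K = PiE B (\<lambda>_. {-1..1::real}) \<inter> {c. (\<Sum>b\<in>B. \<bar>c b\<bar>) = 1}"
  have "closed {c::'a \<Rightarrow> real. (\<Sum>b\<in>B. \<bar>c b\<bar>) = 1}"
    by (intro closed_Collect_eq continuous_intros continuous_on_product_coordinates)
  then have "compact K"
    unfolding K_def using compact_coord_box by blast
  moreover have "{x. coord_norm x = 1} = from_coords ` K"
  proof (intro equalityI subsetI)
    fix x assume "x \<in> {x. coord_norm x = 1}"
    then have "coord_norm x = 1" by simp
    have "restrict (coord x) B \<in> PiE B (\<lambda>_. {-1..1})"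
      using abs_coord_le_coord_norm[of x] \<open>coord_norm x = 1\<close> by (simp add: abs_le_iff)
    moreover have "(\<Sum>b\<in>B. \<bar>restrict (coord x) B b\<bar>) = 1"
      using \<open>coord_norm x = 1\<close> by (simp add: coord_norm_def)
    ultimately have "restrict (coord x) B \<in> K" by (simp add: K_def)
    moreover have "from_coords (restrict (coord x) B) = x"
      using from_coords_coord[of x] by (simp add: from_coords_def)
    ultimately show "x \<in> from_coords ` K" by (metis image_eqI)
  next
    fix x assume "x \<in> from_coords ` K"
    then obtain c where "c \<in> K" "x = from_coords c" by blast
    then have "coord_norm x = (\<Sum>b\<in>B. \<bar>c b\<bar>)"
      by (simp add: coord_norm_def coord_from_coords)
    with \<open>c \<in> K\<close> show "x \<in> {x. coord_norm x = 1}" by (simp add: K_def)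
  qed
  ultimately show ?thesis
    by (metis compact_continuous_image continuous_on_from_coords continuous_on_subset subset_UNIV)
qed

lemma coord_norm_nonneg: "coord_norm x \<ge> 0"
  by (simp add: coord_norm_def sum_nonneg)

lemma coord_norm_scale: "coord_norm (c *\<^sub>R x) = \<bar>c\<bar> * coord_norm x"
proof -
  interpret l: linear "\<lambda>x. coord x b" for b by (rule linear_coord)
  show ?thesis by (simp add: coord_norm_def l.scale abs_mult sum_distrib_left)
qed

text \<open>The norm attains a positive minimum on the compact \<open>\<ell>\<^sub>1\<close>-sphere.\<close>
lemma coord_norm_le: "\<exists>C\<ge>0. \<forall>x. coord_norm x \<le> C * norm x"
proof (cases "{x. coord_norm x = 1} = {}")
  case True
  have "coord_norm x = 0" for x
  proof (rule ccontr)
    assume "coord_norm x \<noteq> 0"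
    then have "coord_norm ((1 / coord_norm x) *\<^sub>R x) = 1"
      using coord_norm_nonneg[of x] by (simp add: coord_norm_scale)
    with True show False by blast
  qed
  then show ?thesis by (intro exI[of _ 0]) simp
next
  case False
  obtain m where m: "m \<in> {x. coord_norm x = 1}" "\<And>x. coord_norm x = 1 \<Longrightarrow> norm m \<le> norm x"
    using continuous_attains_inf[OF compact_coord_norm_sphere False continuous_on_norm_id] by blast
  have "m \<noteq> 0"
    using m(1) coord_norm_scale[of 0 m] by auto
  have "coord_norm x \<le> (1 / norm m) * norm x" for x
  proof (cases "coord_norm x = 0")
    case False
    then have pos: "coord_norm x > 0"
      using coord_norm_nonneg[of x] by linarith
    then have "norm m \<le> norm ((1 / coord_norm x) *\<^sub>R x)"
      by (intro m(2)) (simp add: coord_norm_scale)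
    with pos \<open>m \<noteq> 0\<close> show ?thesis
      by (simp add: field_simps)
  qed (simp add: \<open>m \<noteq> 0\<close>)
  then show ?thesis
    by (metis norm_ge_zero divide_nonneg_nonneg zero_le_one)
qed

lemma linear_imp_bounded_linear:
  fixes T :: "'a \<Rightarrow> 'b::real_normed_vector"
  assumes "linear T"
  shows "bounded_linear T"
proof -
  interpret l: linear T by fact
  obtain C where C: "\<And>x. coord_norm x \<le> C * norm x"
    using coord_norm_le by blast
  define K where "K = C * (\<Sum>b\<in>B. norm (T b))"
  have "norm (T x) \<le> norm x * K" for x
  proof -
    have "T x = (\<Sum>b\<in>B. coord x b *\<^sub>R T b)"
      using arg_cong[OF from_coords_coord[of x], of T] by (simp add: from_coords_def l.sum l.scale)
    then have "norm (T x) \<le> (\<Sum>b\<in>B. \<bar>coord x b\<bar> * norm (T b))"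
      by (metis (no_types, lifting) norm_scaleR norm_sum sum.cong)
    also have "\<dots> \<le> (\<Sum>b\<in>B. coord_norm x * norm (T b))"
      by (intro sum_mono mult_right_mono abs_coord_le_coord_norm) auto
    also have "\<dots> = coord_norm x * (\<Sum>b\<in>B. norm (T b))"
      by (rule sum_distrib_left[symmetric])
    also have "\<dots> \<le> C * norm x * (\<Sum>b\<in>B. norm (T b))"
      by (intro mult_right_mono C sum_nonneg) auto
    finally show ?thesis by (simp add: K_def algebra_simps)
  qed
  then show ?thesis
    by (intro bounded_linear_intro[where K=K]) (auto simp: l.add l.scale)
qed

lemma continuous_on_coord: "continuous_on S (\<lambda>x. coord x b)"
  by (intro linear_continuous_on linear_imp_bounded_linear linear_coord)

lemma bounded_closed_imp_compact:
  fixes S :: "'a set"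
  assumes "bounded S" "closed S"
  shows "compact S"
proof -
  obtain R where R: "\<And>x. x \<in> S \<Longrightarrow> norm x \<le> R"
    using assms(1) bounded_iff by blast
  obtain C where "C \<ge> 0" and C: "\<And>x. coord_norm x \<le> C * norm x"
    using coord_norm_le by blast
  have "S \<subseteq> from_coords ` PiE B (\<lambda>_. {-(C * R)..C * R})"
  proof
    fix x assume "x \<in> S"
    have "\<bar>coord x b\<bar> \<le> C * R" for b
      using abs_coord_le_coord_norm[of x b] C[of x] mult_left_mono[OF R[OF \<open>x \<in> S\<close>] \<open>C \<ge> 0\<close>]
      by linarith
    then have "restrict (coord x) B \<in> PiE B (\<lambda>_. {-(C * R)..C * R})"
      by (auto simp: abs_le_iff minus_le_iff)
    moreover have "from_coords (restrict (coord x) B) = x"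
      using from_coords_coord[of x] by (simp add: from_coords_def)
    ultimately show "x \<in> from_coords ` PiE B (\<lambda>_. {-(C * R)..C * R})"
      by (metis image_eqI)
  qed
  moreover have "compact (from_coords ` PiE B (\<lambda>_. {-(C * R)..C * R}))"
    by (intro compact_continuous_image compact_coord_box continuous_on_subset[OF continuous_on_from_coords]) simp
  ultimately show ?thesis
    using assms(2) by (metis compact_Int_closed inf.absorb_iff2)
qed

text \<open>Any continuous strictly convex function would do: maximising it over a compact set
  selects an extreme point of that set.\<close>
definition coord_sqnorm :: "'a \<Rightarrow> real" where
  "coord_sqnorm x = (\<Sum>b\<in>B. (coord x b)\<^sup>2)"

lemma continuous_on_coord_sqnorm: "continuous_on S coord_sqnorm"
  unfolding coord_sqnorm_def by (intro continuous_intros continuous_on_coord)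

lemma coord_sqnorm_strict_convex:
  assumes "a \<noteq> b" "0 < u" "u < 1"
  shows "coord_sqnorm ((1 - u) *\<^sub>R a + u *\<^sub>R b) < (1 - u) * coord_sqnorm a + u * coord_sqnorm b"
proof -
  interpret coord: linear "\<lambda>x. coord x c" for c by (rule linear_coord)
  have sq: "((1 - u) * s + u * t)\<^sup>2 = (1 - u) * s\<^sup>2 + u * t\<^sup>2 - u * (1 - u) * (s - t)\<^sup>2" for s t :: real
    by (simp add: power2_eq_square algebra_simps)
  have "coord_sqnorm ((1 - u) *\<^sub>R a + u *\<^sub>R b)
      = (1 - u) * coord_sqnorm a + u * coord_sqnorm b - u * (1 - u) * (\<Sum>c\<in>B. (coord a c - coord b c)\<^sup>2)"
    by (simp add: coord_sqnorm_def coord.add coord.scale sq sum.distrib sum_subtractf sum_distrib_left)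
  moreover have "\<exists>c\<in>B. coord a c \<noteq> coord b c"
  proof (rule ccontr)
    assume "\<not> ?thesis"
    then have "from_coords (coord a) = from_coords (coord b)"
      unfolding from_coords_def by (intro sum.cong) auto
    with assms(1) show False by simp
  qed
  then obtain c where "c \<in> B" "coord a c \<noteq> coord b c" by blast
  then have "0 < (\<Sum>c\<in>B. (coord a c - coord b c)\<^sup>2)"
    using finite_B by (intro sum_pos2[where i=c]) auto
  ultimately show ?thesis using assms(2,3) by simp
qed

lemma exists_extreme_point_maximizing_norm_image:
  fixes T :: "'a \<Rightarrow> 'b::real_normed_vector"
  assumes T: "linear T" and g: "linear g" "\<And>y. g y \<le> norm y" and x: "x \<in> cball 0 1" "g x = 1"
  obtains e where "e extreme_point_of cball 0 1" "g e = 1"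
    and "\<And>z. z \<in> cball 0 1 \<Longrightarrow> g z = 1 \<Longrightarrow> norm (T z) \<le> norm (T e)"
proof -
  define F where "F = {z \<in> cball 0 1. g z = 1}"
  have F_eq: "F = cball 0 1 \<inter> g -` {1}"
    by (auto simp: F_def)
  have cont_g: "continuous_on UNIV g" and cont_T: "continuous_on UNIV (\<lambda>z. norm (T z))"
    using g(1) T by (auto intro!: linear_continuous_on linear_imp_bounded_linear continuous_on_norm)
  have "compact F"
    unfolding F_eq
    by (intro bounded_closed_imp_compact closed_Int closed_vimage cont_g) auto
  moreover have "F \<noteq> {}" using x by (auto simp: F_def)
  ultimately have "\<exists>z1\<in>F. \<forall>z\<in>F. norm (T z) \<le> norm (T z1)"
    using continuous_on_subset[OF cont_T subset_UNIV] by (rule continuous_attains_sup)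
  then obtain z1 where "z1 \<in> F" and z1: "\<And>z. z \<in> F \<Longrightarrow> norm (T z) \<le> norm (T z1)"
    by blast
  define K where "K = {z \<in> F. norm (T z) = norm (T z1)}"
  have "K = F \<inter> (\<lambda>z. norm (T z)) -` {norm (T z1)}"
    by (auto simp: K_def)
  then have "compact K"
    using \<open>compact F\<close> by (simp add: compact_Int_closed closed_vimage cont_T)
  moreover have "K \<noteq> {}" using \<open>z1 \<in> F\<close> by (auto simp: K_def)
  ultimately have "\<exists>e\<in>K. \<forall>z\<in>K. coord_sqnorm z \<le> coord_sqnorm e"
    using continuous_on_coord_sqnorm by (rule continuous_attains_sup)
  then obtain e where "e \<in> K" and e: "\<And>z. z \<in> K \<Longrightarrow> coord_sqnorm z \<le> coord_sqnorm e"
    by blast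
  have "e extreme_point_of K"
    using \<open>e \<in> K\<close> e coord_sqnorm_strict_convex by (rule extreme_point_of_strict_convex_max)
  moreover have "convex F"
    unfolding F_eq by (intro convex_Int convex_cball convex_linear_vimage g(1) convex_singleton)
  then have "convex_on F (\<lambda>z. norm (T z))"
    by (rule convex_on_norm_linear[OF T])
  ultimately have "e extreme_point_of F"
    using extreme_point_of_maximizers[of F "\<lambda>z. norm (T z)" "norm (T z1)" e] z1
    unfolding K_def by blast
  moreover have "convex_on (cball 0 1) g"
    by (rule convex_on_linear[OF g(1) convex_cball])
  moreover have "g z \<le> 1" if "z \<in> cball 0 1" for z
    using g(2)[of z] that by simp
  ultimately have "e extreme_point_of cball 0 1"
    using extreme_point_of_maximizers[of "cball 0 1" g 1 e] unfolding F_def by blast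
  then show ?thesis
    using that \<open>e \<in> K\<close> z1 by (auto simp: K_def F_def)
qed

lemma norm_image_mult_norming_functional_le:
  fixes T :: "'a \<Rightarrow> 'a"
  assumes T: "linear T" and pres: "\<And>e. e extreme_point_of cball 0 1 \<Longrightarrow> preserves_bj_at T e"
    and g: "norming_functional g x"
  shows "norm (T x) * g y \<le> norm x * norm (T y)"
proof (cases "x = 0")
  case True
  then show ?thesis using T by (simp add: linear_0)
next
  case False
  interpret T: linear T by fact
  have g_lin: "linear g" and g_le: "\<And>y. g y \<le> norm y" and g_x: "g x = norm x"
    using g by (auto simp: norming_functional_def)
  interpret g: linear g by (fact g_lin)
  define x1 where "x1 = (1 / norm x) *\<^sub>R x"
  have "x1 \<in> cball 0 1" "g x1 = 1"
    using False by (simp_all add: x1_def g.scale g_x)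
  then obtain e where e: "e extreme_point_of cball 0 1" "g e = 1"
    and max: "\<And>z. z \<in> cball 0 1 \<Longrightarrow> g z = 1 \<Longrightarrow> norm (T z) \<le> norm (T e)"
    using exists_extreme_point_maximizing_norm_image[OF T g_lin g_le] by blast
  have "norm e = 1"
    using e g_le[of e] by (simp add: extreme_point_of_def)
  then have "norming_functional g e"
    using g e(2) by (simp add: norming_functional_def)
  then have key: "\<bar>g y\<bar> * norm (T e) \<le> norm (T y)"
    using abs_norming_functional_le_if_preserves_bj[OF T pres[OF e(1)]] \<open>norm e = 1\<close> by blast
  have "norm (T x) = norm x * norm (T x1)"
    using False by (simp add: x1_def T.scale)
  also have "\<dots> \<le> norm x * norm (T e)"
    using max[OF \<open>x1 \<in> cball 0 1\<close> \<open>g x1 = 1\<close>] by (simp add: mult_left_mono)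
  finally have Tx: "norm (T x) \<le> norm x * norm (T e)" .
  have "norm (T x) * g y \<le> norm (T x) * \<bar>g y\<bar>"
    by (simp add: mult_left_mono)
  also have "\<dots> \<le> norm x * norm (T e) * \<bar>g y\<bar>"
    using Tx by (simp add: mult_right_mono)
  also have "\<dots> \<le> norm x * norm (T y)"
    using key by (simp add: mult_left_mono mult.assoc mult.commute[of "norm (T e)"])
  finally show ?thesis .
qed

end

lemma telescoping_lower_bound:
  fixes h a :: "nat \<Rightarrow> real"
  assumes step: "\<And>i. i < k \<Longrightarrow> h i * (1 - a i) \<le> h (Suc i)"
    and h: "\<And>i. h i \<ge> 0" and a: "\<And>i. a i \<ge> 0"
  shows "h 0 * (1 - (\<Sum>i<k. a i)) \<le> h k"
  using step
proof (induction k)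
  case 0
  then show ?case by simp
next
  case (Suc k)
  then have IH: "h 0 * (1 - (\<Sum>i<k. a i)) \<le> h k" and "h k * (1 - a k) \<le> h (Suc k)"
    by simp_all
  show ?case
  proof (cases "(\<Sum>i<Suc k. a i) \<le> 1")
    case True
    have "0 \<le> (\<Sum>i<k. a i)" by (simp add: a sum_nonneg)
    then have "1 - (\<Sum>i<Suc k. a i) \<le> (1 - (\<Sum>i<k. a i)) * (1 - a k)"
      using a[of k] by (simp add: algebra_simps)
    then have "h 0 * (1 - (\<Sum>i<Suc k. a i)) \<le> h 0 * (1 - (\<Sum>i<k. a i)) * (1 - a k)"
      using h[of 0] by (simp add: mult_left_mono mult.assoc)
    also have "\<dots> \<le> h k * (1 - a k)"
      using IH True \<open>0 \<le> (\<Sum>i<k. a i)\<close> by (intro mult_right_mono) simp_all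
    also have "\<dots> \<le> h (Suc k)" by fact
    finally show ?thesis .
  next
    case False
    then have "h 0 * (1 - (\<Sum>i<Suc k. a i)) \<le> 0"
      using h[of 0] by (simp add: mult_nonneg_nonpos)
    then show ?thesis using h[of "Suc k"] by linarith
  qed
qed

text \<open>Along an arithmetic progression the defects \<open>\<parallel>z\<^sub>i\<^sub>+\<^sub>1\<parallel> - G\<^sub>i z\<^sub>i\<^sub>+\<^sub>1\<close> are
  bounded by the increments \<open>G\<^sub>i\<^sub>+\<^sub>1 w - G\<^sub>i w\<close>, so their sum telescopes.\<close>
lemma sum_norming_defect_le:
  assumes G: "\<And>i. norming_functional (G i) (z i)" and z: "\<And>i. z (Suc i) = z i + w"
  shows "(\<Sum>i<k. norm (z (Suc i)) - G i (z (Suc i))) \<le> 2 * norm w"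
proof -
  have lin: "linear (G i)" and le: "\<And>y. G i y \<le> norm y" and eq: "G i (z i) = norm (z i)" for i
    using G by (auto simp: norming_functional_def)
  have defect: "norm (z (Suc i)) - G i (z (Suc i)) \<le> G (Suc i) w - G i w" for i
  proof -
    interpret G: linear "G j" for j by (rule lin)
    have "norm (z (Suc i)) = G (Suc i) (z i) + G (Suc i) w"
      using eq[of "Suc i"] by (simp add: z G.add)
    moreover have "G i (z (Suc i)) = norm (z i) + G i w"
      by (simp add: z G.add eq)
    ultimately show ?thesis using le[of "Suc i" "z i"] by simp
  qed
  have "(\<Sum>i<k. norm (z (Suc i)) - G i (z (Suc i))) \<le> (\<Sum>i<k. G (Suc i) w - G i w)"
    by (intro sum_mono defect)
  also have "\<dots> = G k w - G 0 w"
    by (rule sum_lessThan_telescope)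
  also have "\<dots> \<le> 2 * norm w"
    using le[of k w] le[of 0 "- w"] linear_neg[OF lin[of 0], of w] by simp
  finally show ?thesis .
qed

locale norming_dominated =
  fixes N :: "'a::real_normed_vector \<Rightarrow> real"
  assumes nonneg: "N z \<ge> 0"
    and mult_norming_le: "norming_functional g x \<Longrightarrow> N x * g y \<le> norm x * N y"
    and norming_exists: "\<exists>g. norming_functional g x"
begin

lemma ratio_step_lower_bound:
  assumes g: "norming_functional g x"
    and \<delta>: "0 < \<delta>" "\<delta> \<le> norm x" "\<delta> \<le> norm y"
  shows "N x / norm x * (1 - (norm y - g y) / \<delta>) \<le> N y / norm y"
proof -
  have pos: "norm x > 0" "norm y > 0" using \<delta> by linarith+
  have "norm y - g y \<ge> 0" using g by (simp add: norming_functional_def)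
  then have "(norm y - g y) / norm y \<le> (norm y - g y) / \<delta>"
    using \<delta> pos by (intro divide_left_mono) simp_all
  then have "1 - (norm y - g y) / \<delta> \<le> g y / norm y"
    using pos by (simp add: diff_divide_distrib)
  then have "N x / norm x * (1 - (norm y - g y) / \<delta>) \<le> N x / norm x * (g y / norm y)"
    using nonneg[of x] pos by (intro mult_left_mono) auto
  also have "\<dots> = (N x * g y) / (norm x * norm y)" by simp
  also have "\<dots> \<le> (norm x * N y) / (norm x * norm y)"
    using mult_norming_le[OF g] pos by (intro divide_right_mono) auto
  also have "\<dots> = N y / norm y" using pos by simp
  finally show ?thesis .
qed

lemma ratio_lower_bound_on_segment:
  assumes \<delta>: "\<delta> > 0" "\<And>z. z \<in> closed_segment a b \<Longrightarrow> \<delta> \<le> norm z"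
    and k: "k \<ge> 1"
  shows "N a / norm a * (1 - 2 * norm (b - a) / (real k * \<delta>)) \<le> N b / norm b"
proof -
  define w where "w = (1 / real k) *\<^sub>R (b - a)"
  define z where "z i = a + real i *\<^sub>R w" for i
  define G where "G i = (SOME g. norming_functional g (z i))" for i
  have G: "norming_functional (G i) (z i)" for i
    unfolding G_def using norming_exists by (rule someI_ex)
  have z_Suc: "z (Suc i) = z i + w" for i
    by (simp add: z_def algebra_simps)
  have "z i \<in> closed_segment a b" if "i \<le> k" for i
  proof -
    have "z i = (1 - real i / real k) *\<^sub>R a + (real i / real k) *\<^sub>R b"
      by (simp add: z_def w_def algebra_simps)
    moreover have "0 \<le> real i / real k" "real i / real k \<le> 1" using that k by auto
    ultimately show ?thesis unfolding in_segment by blast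
  qed
  then have z_ge: "\<delta> \<le> norm (z i)" if "i \<le> k" for i
    using \<delta>(2) that by blast
  define e where "e i = (norm (z (Suc i)) - G i (z (Suc i))) / \<delta>" for i
  have telescoped: "N (z 0) / norm (z 0) * (1 - (\<Sum>i<k. e i)) \<le> N (z k) / norm (z k)"
  proof (rule telescoping_lower_bound)
    show "N (z i) / norm (z i) * (1 - e i) \<le> N (z (Suc i)) / norm (z (Suc i))" if "i < k" for i
      unfolding e_def using that
      by (intro ratio_step_lower_bound G \<delta>(1) z_ge) auto
    show "0 \<le> e i" for i
      using G[of i] \<delta>(1) by (simp add: e_def norming_functional_def)
  qed (simp add: nonneg)
  have "(\<Sum>i<k. e i) \<le> 2 * norm (b - a) / (real k * \<delta>)"
  proof -
    have "(\<Sum>i<k. e i) \<le> 2 * norm w / \<delta>"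
      unfolding e_def sum_divide_distrib[symmetric] using \<delta>(1)
      by (intro divide_right_mono sum_norming_defect_le[where G=G and z=z, OF G z_Suc]) auto
    also have "\<dots> = 2 * norm (b - a) / (real k * \<delta>)"
      using k by (simp add: w_def)
    finally show ?thesis .
  qed
  then have "N a / norm a * (1 - 2 * norm (b - a) / (real k * \<delta>)) \<le> N a / norm a * (1 - (\<Sum>i<k. e i))"
    using nonneg[of a] by (intro mult_left_mono) simp_all
  also have "\<dots> \<le> N b / norm b"
    using telescoped k by (simp add: z_def w_def)
  finally show ?thesis .
qed

lemma ratio_mono_on_segment:
  assumes "0 \<notin> closed_segment a b"
  shows "N a / norm a \<le> N b / norm b"
proof -
  have "closed_segment a b \<noteq> {}" by auto
  then have "\<exists>z0\<in>closed_segment a b. \<forall>z\<in>closed_segment a b. norm z0 \<le> norm z"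
    by (intro continuous_attains_inf compact_segment continuous_on_norm_id)
  then obtain z0 where "z0 \<in> closed_segment a b" and z0: "\<And>z. z \<in> closed_segment a b \<Longrightarrow> norm z0 \<le> norm z"
    by blast
  define \<delta> where "\<delta> = norm z0"
  have "\<delta> > 0"
    using \<open>z0 \<in> closed_segment a b\<close> assms by (auto simp: \<delta>_def)
  have \<delta>_le: "\<delta> \<le> norm z" if "z \<in> closed_segment a b" for z
    using z0[OF that] by (simp add: \<delta>_def)
  define C where "C = 2 * norm (b - a) / \<delta>"
  have bound: "N a / norm a * (1 - C / real k) \<le> N b / norm b" if "k \<ge> 1" for k
    using ratio_lower_bound_on_segment[OF \<open>\<delta> > 0\<close> \<delta>_le that]
    by (simp add: C_def mult.commute)
  have "(\<lambda>k. N a / norm a * (1 - C / real k)) \<longlonglongrightarrow> N a / norm a * (1 - 0)"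
    by (intro tendsto_intros)
  then have "(\<lambda>k. N a / norm a * (1 - C / real k)) \<longlonglongrightarrow> N a / norm a"
    by simp
  then show ?thesis
    by (rule LIMSEQ_le_const2) (use bound in auto)
qed

lemma const_mul_norm_if_homogeneous:
  assumes N_scale: "\<And>c x. N (c *\<^sub>R x) = \<bar>c\<bar> * N x"
  shows "\<exists>c\<ge>0. \<forall>x. N x = c * norm x"
proof -
  have ratio_eq: "N a / norm a = N b / norm b" if "a \<noteq> 0" "b \<noteq> 0" for a b
  proof (cases "0 \<in> closed_segment a b")
    case True
    then obtain u where u: "(1 - u) *\<^sub>R a + u *\<^sub>R b = 0"
      by (auto simp: in_segment)
    with \<open>a \<noteq> 0\<close> have "u \<noteq> 0" by auto
    from u have ub: "u *\<^sub>R b = (u - 1) *\<^sub>R a"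
      by (simp add: algebra_simps eq_neg_iff_add_eq_0 add.commute)
    have "b = (1 / u) *\<^sub>R (u *\<^sub>R b)" using \<open>u \<noteq> 0\<close> by simp
    also have "\<dots> = ((u - 1) / u) *\<^sub>R a" by (simp add: ub)
    finally have b: "b = ((u - 1) / u) *\<^sub>R a" .
    with \<open>b \<noteq> 0\<close> have "\<bar>(u - 1) / u\<bar> \<noteq> 0" by auto
    then show ?thesis
      unfolding b N_scale norm_scaleR by (rule mult_divide_mult_cancel_left[symmetric])
  next
    case False
    then have "0 \<notin> closed_segment b a" by (simp add: closed_segment_commute)
    with False show ?thesis
      using ratio_mono_on_segment by (meson order_antisym)
  qed
  have "N 0 = 0" using N_scale[of 0 0] by simp
  show ?thesis
  proof (cases "\<exists>x0::'a. x0 \<noteq> 0")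
    case True
    then obtain x0 :: 'a where "x0 \<noteq> 0" by blast
    have "N x = N x0 / norm x0 * norm x" for x
    proof (cases "x = 0")
      case True
      then show ?thesis using \<open>N 0 = 0\<close> by simp
    next
      case False
      then show ?thesis using ratio_eq[OF False \<open>x0 \<noteq> 0\<close>] by (simp add: divide_eq_eq)
    qed
    moreover have "N x0 / norm x0 \<ge> 0" using nonneg[of x0] by simp
    ultimately show ?thesis by blast
  next
    case False
    then have "N x = 0 * norm x" for x using \<open>N 0 = 0\<close> by (metis mult_zero_left)
    then show ?thesis by blast
  qed
qed

end

theorem mainTheorem15:
  fixes T :: "'a::banach \<Rightarrow> 'a"
  assumes findim: "\<exists>B. finite B \<and> span B = (UNIV :: 'a set)"
    and lin: "linear T"
    and pres: "\<And>x. x extreme_point_of cball (0::'a) 1 \<Longrightarrow> preserves_bj_at T x"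
  shows "\<exists>c::real. c \<ge> 0 \<and> (\<forall>x. norm (T x) = c * norm x)"
proof -
  obtain A :: "'a set" where A: "finite A" "span A = UNIV"
    using findim by blast
  obtain B where B: "B \<subseteq> A" "independent B" "A \<subseteq> span B"
    using maximal_independent_subset[of A] by blast
  have "span B = UNIV"
    using span_mono[OF B(3)] A(2) by (simp add: span_span top.extremum_unique)
  then interpret normed_space_basis B
    using B finite_subset[OF B(1) A(1)] by unfold_locales
  interpret norming_dominated "\<lambda>x. norm (T x)"
    using norm_image_mult_norming_functional_le[OF lin pres] exists_norming_functional[OF A]
    by unfold_locales auto
  show ?thesis
    by (rule const_mul_norm_if_homogeneous) (simp add: linear_scale[OF lin])
qed

end
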